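(* Let $H\subseteq\binom{[n]}{3}$ be such that $\bigcup_{h\in H}h=[n]$ and every $h\in H$ contains a vertex $v$ with $d_H(v)\ge2$. Then $|H|\ge 2n/5$.
   Context: $d_H(v)=|\{h\in H: v\in h\}|$ denotes the degree of $v$ in $H$. *)

theory Defs
  imports Main
begin

definition degree :: "'a set set \<Rightarrow> 'a \<Rightarrow> nat" where
  "degree H v = card {h \<in> H. v \<in> h}"

end

theory Submission
  imports Defs
begin

text \<open>Let \<open>L\<close> be the set of vertices of degree one. Every other vertex has degree at least two,
  so double counting gives \<open>3|H| \<ge> 2n - |L|\<close>. Each vertex of \<open>L\<close> lies in exactly one edge, and
  each edge contains at most two vertices of \<open>L\<close> since one of its vertices has degree at least two;
  hence \<open>|L| \<le> 2|H|\<close>, and adding the two inequalities gives \<open>5|H| \<ge> 2n\<close>.\<close>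

lemma sum_degree_eq_sum_card_Int:
  assumes "finite V" "finite H"
  shows "(\<Sum>v\<in>V. degree H v) = (\<Sum>h\<in>H. card (h \<inter> V))"
proof -
  have "(\<Sum>v\<in>V. degree H v) = (\<Sum>v\<in>V. \<Sum>h\<in>H. if v \<in> h then 1 else (0::nat))"
    unfolding degree_def using assms
    by (intro sum.cong) (auto simp: sum.If_cases Int_def conj_commute)
  also have "\<dots> = (\<Sum>h\<in>H. \<Sum>v\<in>V. if v \<in> h then 1 else (0::nat))"
    by (rule sum.swap)
  also have "\<dots> = (\<Sum>h\<in>H. card (h \<inter> V))"
    using assms by (simp add: sum.If_cases Int_commute)
  finally show ?thesis .
qed

lemma sum_degree_uniform:
  assumes "finite V" "finite H" "\<forall>h\<in>H. h \<subseteq> V \<and> card h = k"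
  shows "(\<Sum>v\<in>V. degree H v) = k * card H"
proof -
  have "(\<Sum>v\<in>V. degree H v) = (\<Sum>h\<in>H. card (h \<inter> V))"
    using assms(1,2) by (rule sum_degree_eq_sum_card_Int)
  also have "\<dots> = (\<Sum>h\<in>H. k)"
    using assms(3) by (intro sum.cong) (auto simp: Int_absorb2)
  finally show ?thesis by simp
qed

lemma degree_pos:
  assumes "finite H" "v \<in> \<Union>H"
  shows "degree H v \<ge> 1"
proof -
  from assms(2) obtain h where "h \<in> H" "v \<in> h" by blast
  then have "{h \<in> H. v \<in> h} \<noteq> {}" by auto
  with assms(1) show ?thesis
    unfolding degree_def by (simp add: Suc_le_eq card_gt_0_iff)
qed

lemma double_card_le_sum_degree:
  assumes "finite V" "finite H" "V \<subseteq> \<Union>H"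
  shows "2 * card V \<le> (\<Sum>v\<in>V. degree H v) + card {v \<in> V. degree H v = 1}"
proof -
  have "2 * card V = (\<Sum>v\<in>V. 2::nat)" by simp
  also have "\<dots> \<le> (\<Sum>v\<in>V. degree H v + (if degree H v = 1 then 1 else 0))"
  proof (rule sum_mono)
    fix v assume "v \<in> V"
    with assms have "degree H v \<ge> 1" by (intro degree_pos) auto
    then show "2 \<le> degree H v + (if degree H v = 1 then 1 else 0)" by auto
  qed
  also have "\<dots> = (\<Sum>v\<in>V. degree H v) + card {v \<in> V. degree H v = 1}"
    using assms(1) by (simp add: sum.distrib sum.If_cases Int_def)
  finally show ?thesis .
qed

lemma card_degree_one_le:
  assumes "finite V" "finite H" "\<forall>h\<in>H. finite h \<and> card h \<le> k"
    and "\<forall>h\<in>H. \<exists>w\<in>h. degree H w \<noteq> 1"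
  shows "card {v \<in> V. degree H v = 1} \<le> (k - 1) * card H"
proof -
  define L where "L = {v \<in> V. degree H v = 1}"
  have "card L = (\<Sum>v\<in>L. degree H v)" by (simp add: L_def)
  also have "\<dots> = (\<Sum>h\<in>H. card (h \<inter> L))"
    using assms(1,2) by (intro sum_degree_eq_sum_card_Int) (simp_all add: L_def)
  also have "\<dots> \<le> (\<Sum>h\<in>H. k - 1)"
  proof (rule sum_mono)
    fix h assume "h \<in> H"
    with assms(3,4) obtain w where w: "w \<in> h" "degree H w \<noteq> 1" and h: "finite h" "card h \<le> k"
      by blast
    have "h \<inter> L \<subseteq> h - {w}" using w(2) by (auto simp: L_def)
    then have "card (h \<inter> L) \<le> card (h - {w})" using h(1) by (intro card_mono) auto
    also have "\<dots> \<le> k - 1" using w(1) h by simp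
    finally show "card (h \<inter> L) \<le> k - 1" .
  qed
  finally show ?thesis by (simp add: L_def mult.commute)
qed

theorem lemmaA1:
  fixes n :: nat and H :: "nat set set"
  assumes "\<forall>h\<in>H. h \<subseteq> {1..n} \<and> card h = 3"
    and "\<Union>H = {1..n}"
    and "\<forall>h\<in>H. \<exists>v\<in>h. degree H v \<ge> 2"
  shows "5 * card H \<ge> 2 * n"
proof -
  define V where "V = {1..n}"
  have "finite V" by (simp add: V_def)
  moreover have "H \<subseteq> Pow V" using assms(1) by (auto simp: V_def)
  ultimately have "finite H" by (meson finite_Pow_iff finite_subset)
  have edges: "\<forall>h\<in>H. h \<subseteq> V \<and> card h = 3" using assms(1) by (simp add: V_def)
  have "2 * card V \<le> (\<Sum>v\<in>V. degree H v) + card {v \<in> V. degree H v = 1}"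
    using \<open>finite V\<close> \<open>finite H\<close> assms(2) by (intro double_card_le_sum_degree) (simp_all add: V_def)
  moreover have "(\<Sum>v\<in>V. degree H v) = 3 * card H"
    using \<open>finite V\<close> \<open>finite H\<close> edges by (rule sum_degree_uniform)
  moreover have "card {v \<in> V. degree H v = 1} \<le> (3 - 1) * card H"
  proof (rule card_degree_one_le)
    show "\<forall>h\<in>H. finite h \<and> card h \<le> 3"
      using edges by (auto intro: card_ge_0_finite)
    show "\<forall>h\<in>H. \<exists>w\<in>h. degree H w \<noteq> 1"
      using assms(3) by (metis numeral_le_one_iff semiring_norm(69))
  qed fact+
  ultimately show ?thesis by (simp add: V_def)
qed

end
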